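(* Let $\mathcal{Z}\subset\mathbb{R}^d$ be a convex compact set with $\max_{\mathbf{z},\mathbf{z}'\in\mathcal{Z}}\|\mathbf{z}-\mathbf{z}'\|\le D$, let $\rho>0$, and let $F:\mathcal{Z}\rightrightarrows\mathbb{R}^d$ be a $\rho$-weakly monotone set-valued mapping such that $\mathrm{MVI}(F,\mathcal{Z})$ has a solution. Set $\gamma=\frac{1}{2\rho}$, fix $\alpha\ge 1$, an integer $K\ge1$, and weights $\theta_k=(k+1)^\alpha$. Let $\mathbf{z}_0\in\mathcal{Z}$ and let $\mathbf{z}_1,\dots,\mathbf{z}_K\in\mathcal{Z}$ be (possibly random) points generated sequentially by the inexact proximal point method: for $k=0,\dots,K-1$, with $F_k(\mathbf{z}):=F(\mathbf{z})+\gamma^{-1}(\mathbf{z}-\mathbf{z}_k)$, the point $\mathbf{z}_{k+1}$ is the output of a subroutine $\mathrm{ApproxSVI}(F_k,\mathcal{Z},\mathbf{z}_k,\eta_k,T_k)$. Suppose there is a constant $c>0$ such that for every $k=0,1,\dots,K-1$ there exists $\boldsymbol{\xi}_{k+1}\in F_k(\mathbf{z}_{k+1})$ with $$\max_{\mathbf{z}\in\mathcal{Z}}\mathbb{E}\big[\boldsymbol{\xi}_{k+1}^{\top}(\mathbf{z}_{k+1}-\mathbf{z})\,\big|\,\mathbf{z}_k\big]\le \frac{c}{k+1},$$ where $\mathbb{E}[\cdot\mid\mathbf{z}_k]$ is the conditional expectation conditioning on $\mathbf{z}_k$. Let $\tau\in\{0,1,\dots,K-1\}$ be drawn with $\mathrm{Prob}(\tau=k)=\theta_k/\sum_{l=0}^{K-1}\theta_l$,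 and let $\bar{\mathbf{z}}_\tau$ be the unique solution of $\mathrm{SVI}(F^\gamma_{\mathbf{z}_\tau},\mathcal{Z})$, where $F^\gamma_{\mathbf{w}}(\mathbf{z}):=F(\mathbf{z})+\gamma^{-1}(\mathbf{z}-\mathbf{w})$. Then $$\mathbb{E}\big[\|\mathbf{z}_\tau-\bar{\mathbf{z}}_\tau\|^2\big]\le \frac{2D^2(\alpha+1)}{K}+\frac{4c(\alpha+1)}{K\rho}.$$
   Context: $\|\cdot\|$ is the Euclidean norm. A set-valued mapping $F:\mathcal{Z}\rightrightarrows\mathbb{R}^d$ is $\rho$-weakly monotone if $\langle\boldsymbol{\xi}-\boldsymbol{\xi}',\mathbf{z}-\mathbf{z}'\rangle\ge-\rho\|\mathbf{z}-\mathbf{z}'\|^2$ for all $\mathbf{z},\mathbf{z}'\in\mathcal{Z}$, $\boldsymbol{\xi}\in F(\mathbf{z})$, $\boldsymbol{\xi}'\in F(\mathbf{z}')$; it is $\mu$-strongly monotone if the same holds with right-hand side $\mu\|\mathbf{z}-\mathbf{z}'\|^2$. $\mathrm{SVI}(F,\mathcal{Z})$ is the problem of finding $\mathbf{z}^*\in\mathcal{Z}$ such that there is $\boldsymbol{\xi}^*\in F(\mathbf{z}^* )$ with $\langle\boldsymbol{\xi}^*,\mathbf{z}-\mathbf{z}^*\rangle\ge0$ for all $\mathbf{z}\in\mathcal{Z}$. $\mathrm{MVI}(F,\mathcal{Z})$ is the problem of finding $\mathbf{z}_*\in\mathcal{Z}$ such that $\langle\boldsymbol{\xi},\mathbf{z}-\mathbf{z}_*\rangle\ge0$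 for all $\mathbf{z}\in\mathcal{Z}$ and all $\boldsymbol{\xi}\in F(\mathbf{z})$. For $0<\gamma<\rho^{-1}$ the mapping $F^\gamma_{\mathbf{w}}$ is $(\gamma^{-1}-\rho)$-strongly monotone, so $\mathrm{SVI}(F^\gamma_{\mathbf{w}},\mathcal{Z})$ has a unique solution. Expectations are over all randomness of the subroutines and of $\tau$. *)

theory Defs
  imports "HOL-Analysis.Analysis" "HOL-Probability.Probability"
begin

definition weakly_monotone_on :: "'a::euclidean_space set \<Rightarrow> ('a \<Rightarrow> 'a set) \<Rightarrow> real \<Rightarrow> bool" where
  "weakly_monotone_on Z F \<rho> \<longleftrightarrow>
     (\<forall>z\<in>Z. \<forall>z'\<in>Z. \<forall>\<xi>\<in>F z. \<forall>\<xi>'\<in>F z'. inner (\<xi> - \<xi>') (z - z') \<ge> - \<rho> * (norm (z - z'))\<^sup>2)"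

definition svi_solution :: "('a::euclidean_space \<Rightarrow> 'a set) \<Rightarrow> 'a set \<Rightarrow> 'a \<Rightarrow> bool" where
  "svi_solution F Z zs \<longleftrightarrow> zs \<in> Z \<and> (\<exists>\<xi>\<in>F zs. \<forall>z\<in>Z. inner \<xi> (z - zs) \<ge> 0)"

definition mvi_solution :: "('a::euclidean_space \<Rightarrow> 'a set) \<Rightarrow> 'a set \<Rightarrow> 'a \<Rightarrow> bool" where
  "mvi_solution F Z zs \<longleftrightarrow> zs \<in> Z \<and> (\<forall>z\<in>Z. \<forall>\<xi>\<in>F z. inner \<xi> (z - zs) \<ge> 0)"

definition prox_map :: "('a::euclidean_space \<Rightarrow> 'a set) \<Rightarrow> real \<Rightarrow> 'a \<Rightarrow> 'a \<Rightarrow> 'a set" where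
  "prox_map F \<gamma> w z = (\<lambda>\<xi>. \<xi> + (1 / \<gamma>) *\<^sub>R (z - w)) ` F z"

end

theory Submission
  imports Defs
begin

(*
  Let zbar w be the solution of SVI(F^gamma_w, Z). With gamma = 1/(2 rho) the map F^gamma_w is
  rho-strongly monotone, so an iterate z' = z_{k+1} with xi in F_k(z') satisfies
  rho |z' - zbar z_k|^2 <= <xi, z' - zbar z_k>, while an MVI solution z_* gives the descent
  inequality |z' - z_*|^2 + |z' - z_k|^2 <= |z_k - z_*|^2 + <xi, z' - z_*> / rho. Together with
  the triangle inequality this bounds |z_k - zbar z_k|^2 pointwise. The gap bound is conditional
  on z_k, so it may be evaluated at the z_k-measurable points zbar z_k and z_*; taking
  expectations gives E|z_k - zbar z_k|^2 <= 2 (a_k - a_{k+1}) + 4 c / (rho (k + 1)) with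
  a_k = E|z_k - z_*|^2. As tau is independent of every z_k, the left-hand side of the theorem is
  the theta-weighted average of these bounds; summation by parts against the nondecreasing
  weights and sum_{k<K} theta_k >= K^(alpha+1) / (alpha + 1) give the claim.
*)

section \<open>Proximal maps of weakly monotone operators\<close>

lemma mem_prox_map_iff:
  "\<xi> \<in> prox_map F \<gamma> w z \<longleftrightarrow> (\<exists>\<eta>\<in>F z. \<xi> = \<eta> + (1 / \<gamma>) *\<^sub>R (z - w))"
  by (auto simp: prox_map_def)

lemma prox_map_shift_center:
  assumes "\<xi> \<in> prox_map F \<gamma> w z"
  shows "\<xi> + (1 / \<gamma>) *\<^sub>R (w - w') \<in> prox_map F \<gamma> w' z"
  using assms by (auto simp: mem_prox_map_iff algebra_simps)

lemma prox_map_strongly_monotone: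
  assumes wmon: "weakly_monotone_on Z F \<rho>" and "z \<in> Z" "z' \<in> Z"
    and "\<xi> \<in> prox_map F \<gamma> w z" "\<xi>' \<in> prox_map F \<gamma> w z'"
  shows "(1 / \<gamma> - \<rho>) * (norm (z - z'))\<^sup>2 \<le> inner (\<xi> - \<xi>') (z - z')"
proof -
  obtain \<eta> \<eta>' where "\<eta> \<in> F z" "\<eta>' \<in> F z'"
    and \<xi>: "\<xi> = \<eta> + (1 / \<gamma>) *\<^sub>R (z - w)" and \<xi>': "\<xi>' = \<eta>' + (1 / \<gamma>) *\<^sub>R (z' - w)"
    using assms(4,5) by (auto simp: mem_prox_map_iff)
  then have "- \<rho> * (norm (z - z'))\<^sup>2 \<le> inner (\<eta> - \<eta>') (z - z')"
    using wmon \<open>z \<in> Z\<close> \<open>z' \<in> Z\<close> by (auto simp: weakly_monotone_on_def)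
  moreover have "inner (\<xi> - \<xi>') (z - z') = inner (\<eta> - \<eta>') (z - z') + (1 / \<gamma>) * (norm (z - z'))\<^sup>2"
    unfolding \<xi> \<xi>' power2_norm_eq_inner by (simp add: inner_simps algebra_simps)
  ultimately show ?thesis by (simp add: algebra_simps)
qed

lemma svi_solution_prox_map_inner_ge:
  assumes wmon: "weakly_monotone_on Z F \<rho>" and "z \<in> Z" and "\<xi> \<in> prox_map F \<gamma> w z"
    and "svi_solution (prox_map F \<gamma> w) Z zb"
  shows "(1 / \<gamma> - \<rho>) * (norm (z - zb))\<^sup>2 \<le> inner \<xi> (z - zb)"
proof -
  obtain \<zeta> where "zb \<in> Z" "\<zeta> \<in> prox_map F \<gamma> w zb" "\<forall>u\<in>Z. 0 \<le> inner \<zeta> (u - zb)"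
    using assms(4) by (auto simp: svi_solution_def)
  then have "(1 / \<gamma> - \<rho>) * (norm (z - zb))\<^sup>2 \<le> inner (\<xi> - \<zeta>) (z - zb)"
    and "0 \<le> inner \<zeta> (z - zb)"
    using prox_map_strongly_monotone[OF wmon \<open>z \<in> Z\<close>] assms(2,3) by auto
  then show ?thesis by (simp add: inner_diff_left)
qed

lemma svi_solution_prox_map_lipschitz:
  assumes wmon: "weakly_monotone_on Z F \<rho>" and "\<gamma> > 0"
    and sol: "svi_solution (prox_map F \<gamma> w) Z zb" and sol': "svi_solution (prox_map F \<gamma> w') Z zb'"
  shows "(1 - \<gamma> * \<rho>) * norm (zb - zb') \<le> norm (w - w')"
proof -
  obtain \<zeta> where "zb \<in> Z" "\<zeta> \<in> prox_map F \<gamma> w zb" and vi: "\<forall>u\<in>Z. 0 \<le> inner \<zeta> (u - zb)"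
    using sol by (auto simp: svi_solution_def)
  obtain \<zeta>' where "zb' \<in> Z" "\<zeta>' \<in> prox_map F \<gamma> w' zb'" and vi': "\<forall>u\<in>Z. 0 \<le> inner \<zeta>' (u - zb')"
    using sol' by (auto simp: svi_solution_def)
  have "0 \<le> inner \<zeta> (zb' - zb) + inner \<zeta>' (zb - zb')"
    using vi vi' \<open>zb \<in> Z\<close> \<open>zb' \<in> Z\<close> by (simp add: add_nonneg_nonneg)
  then have "inner (\<zeta> - \<zeta>') (zb - zb') \<le> 0"
    by (simp add: inner_diff_left inner_diff_right inner_commute)
  \<comment> \<open>Recentring \<zeta> at w' puts both solutions under the single strongly monotone map F^gamma_w'.\<close>
  moreover have "(1 / \<gamma> - \<rho>) * (norm (zb - zb'))\<^sup>2
      \<le> inner (\<zeta> + (1 / \<gamma>) *\<^sub>R (w - w') - \<zeta>') (zb - zb')"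
    by (rule prox_map_strongly_monotone[OF wmon \<open>zb \<in> Z\<close> \<open>zb' \<in> Z\<close>
          prox_map_shift_center[OF \<open>\<zeta> \<in> _\<close>] \<open>\<zeta>' \<in> _\<close>])
  moreover have "inner (\<zeta> + (1 / \<gamma>) *\<^sub>R (w - w') - \<zeta>') (zb - zb')
      = inner (\<zeta> - \<zeta>') (zb - zb') + inner (w - w') (zb - zb') / \<gamma>"
    by (simp add: inner_simps diff_divide_distrib)
  moreover have "inner (w - w') (zb - zb') / \<gamma> \<le> (1 / \<gamma>) * (norm (w - w') * norm (zb - zb'))"
    using divide_right_mono[OF norm_cauchy_schwarz, of \<gamma>] \<open>\<gamma> > 0\<close> by simp
  ultimately have "(1 / \<gamma> - \<rho>) * (norm (zb - zb'))\<^sup>2 \<le> (1 / \<gamma>) * (norm (w - w') * norm (zb - zb'))"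
    by linarith
  from mult_left_mono[OF this, of \<gamma>]
  have "(1 - \<gamma> * \<rho>) * norm (zb - zb') * norm (zb - zb') \<le> norm (w - w') * norm (zb - zb')"
    using \<open>\<gamma> > 0\<close> by (simp add: power2_eq_square algebra_simps)
  then show ?thesis
    by (cases "zb = zb'") (simp_all add: mult_le_cancel_right)
qed

lemma prox_step_mvi_descent:
  assumes "\<gamma> > 0" and "z \<in> Z" and "\<xi> \<in> prox_map F \<gamma> w z" and mvi: "mvi_solution F Z zs"
  shows "(norm (z - zs))\<^sup>2 + (norm (z - w))\<^sup>2 \<le> (norm (w - zs))\<^sup>2 + 2 * \<gamma> * inner \<xi> (z - zs)"
proof -
  obtain \<eta> where "\<eta> \<in> F z" and \<xi>: "\<xi> = \<eta> + (1 / \<gamma>) *\<^sub>R (z - w)"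
    using assms(3) by (auto simp: mem_prox_map_iff)
  then have "0 \<le> inner \<eta> (z - zs)"
    using mvi \<open>z \<in> Z\<close> by (auto simp: mvi_solution_def)
  moreover have "2 * \<gamma> * inner \<xi> (z - zs) = 2 * \<gamma> * inner \<eta> (z - zs)
      + ((norm (z - zs))\<^sup>2 + (norm (z - w))\<^sup>2 - (norm (w - zs))\<^sup>2)"
    unfolding \<xi> power2_norm_eq_inner using \<open>\<gamma> > 0\<close>
    by (simp add: inner_simps algebra_simps inner_commute)
  ultimately show ?thesis using \<open>\<gamma> > 0\<close> by (simp add: zero_le_mult_iff)
qed

lemma continuous_on_svi_solution_prox_map:
  assumes wmon: "weakly_monotone_on Z F \<rho>" and "\<gamma> > 0" and "\<gamma> * \<rho> < 1"
    and sol: "\<forall>w\<in>Z. svi_solution (prox_map F \<gamma> w) Z (zbar w)"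
  shows "continuous_on Z zbar"
proof (rule lipschitz_on_continuous_on[OF lipschitz_onI])
  fix w w' assume "w \<in> Z" "w' \<in> Z"
  then have "(1 - \<gamma> * \<rho>) * norm (zbar w - zbar w') \<le> norm (w - w')"
    using svi_solution_prox_map_lipschitz[OF wmon \<open>\<gamma> > 0\<close>] sol by blast
  then show "dist (zbar w) (zbar w') \<le> 1 / (1 - \<gamma> * \<rho>) * dist w w'"
    using \<open>\<gamma> * \<rho> < 1\<close> by (simp add: dist_norm field_simps)
qed (use \<open>\<gamma> * \<rho> < 1\<close> in simp)

lemma prox_step_distance_bound:
  assumes wmon: "weakly_monotone_on Z F \<rho>" and "\<rho> > 0" and \<gamma>: "\<gamma> = 1 / (2 * \<rho>)"
    and "z \<in> Z" and \<xi>: "\<xi> \<in> prox_map F \<gamma> w z"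
    and mvi: "mvi_solution F Z zs" and svi: "svi_solution (prox_map F \<gamma> w) Z zb"
  shows "(norm (w - zb))\<^sup>2 \<le> 2 * ((norm (w - zs))\<^sup>2 - (norm (z - zs))\<^sup>2)
           + 2 / \<rho> * inner \<xi> (z - zs) + 2 / \<rho> * inner \<xi> (z - zb)"
proof -
  have "\<rho> * (norm (z - zb))\<^sup>2 \<le> inner \<xi> (z - zb)"
    using svi_solution_prox_map_inner_ge[OF wmon \<open>z \<in> Z\<close> \<xi> svi] \<gamma> by simp
  then have close: "(norm (z - zb))\<^sup>2 \<le> inner \<xi> (z - zb) / \<rho>"
    using \<open>\<rho> > 0\<close> by (simp add: field_simps)
  have descent: "(norm (z - zs))\<^sup>2 + (norm (z - w))\<^sup>2 \<le> (norm (w - zs))\<^sup>2 + inner \<xi> (z - zs) / \<rho>"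
    using prox_step_mvi_descent[OF _ \<open>z \<in> Z\<close> \<xi> mvi] \<gamma> \<open>\<rho> > 0\<close> by simp
  have "norm (w - zb) \<le> norm (z - w) + norm (z - zb)"
    using norm_triangle_ineq[of "w - z" "z - zb"] by (simp add: norm_minus_commute)
  then have "(norm (w - zb))\<^sup>2 \<le> (norm (z - w) + norm (z - zb))\<^sup>2"
    by (simp add: power_mono)
  also have "\<dots> \<le> 2 * (norm (z - w))\<^sup>2 + 2 * (norm (z - zb))\<^sup>2"
    using zero_le_power2[of "norm (z - w) - norm (z - zb)"] by (simp add: power2_eq_square algebra_simps)
  finally show ?thesis
    using close descent by (simp add: field_simps)
qed

section \<open>Conditional expectations and a random index\<close>

lemma AE_ball_separable:
  fixes Z :: "'b::{metric_space, second_countable_topology} set"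
  assumes AE: "\<And>u. u \<in> Z \<Longrightarrow> AE \<omega> in M. P \<omega> u"
    and closed: "\<And>\<omega>. closed {u. P \<omega> u}"
  shows "AE \<omega> in M. \<forall>u\<in>Z. P \<omega> u"
proof -
  obtain T where T: "countable T" "T \<subseteq> Z" "Z \<subseteq> closure T"
    by (rule separable)
  have "AE \<omega> in M. \<forall>u\<in>T. P \<omega> u"
    using AE T(1,2) by (subst AE_ball_countable) auto
  then show ?thesis
  proof eventually_elim
    case (elim \<omega>)
    then have "closure T \<subseteq> {u. P \<omega> u}"
      by (intro closure_minimal closed) auto
    then show ?case using T(3) by auto
  qed
qed

lemma subalgebra_vimage_algebra:
  assumes "X \<in> measurable M N"
  shows "subalgebra M (vimage_algebra (space M) X N)"
  using assms by (auto simp: subalgebra_def sets_vimage_algebra2 measurable_space measurable_sets)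

lemma borel_measurable_vimage_algebra_continuous_on:
  assumes "continuous_on Z f" and "\<And>\<omega>. \<omega> \<in> \<Omega> \<Longrightarrow> Y \<omega> \<in> Z"
  shows "(\<lambda>\<omega>. f (Y \<omega>)) \<in> borel_measurable (vimage_algebra \<Omega> Y borel)"
proof -
  have "Y \<in> measurable (vimage_algebra \<Omega> Y borel) (restrict_space borel Z)"
    using assms(2) by (intro measurable_restrict_space2 measurable_vimage_algebra1) auto
  then show ?thesis
    using borel_measurable_continuous_on_restrict[OF assms(1)] by (rule measurable_compose)
qed

lemma integrable_inner_bounded:
  fixes \<xi> V :: "'a \<Rightarrow> 'b::euclidean_space"
  assumes "\<xi> \<in> borel_measurable M" and "integrable M (\<lambda>\<omega>. norm (\<xi> \<omega>))"
    and "V \<in> borel_measurable M" and V: "\<And>\<omega>. \<omega> \<in> space M \<Longrightarrow> norm (V \<omega>) \<le> B"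
  shows "integrable M (\<lambda>\<omega>. inner (\<xi> \<omega>) (V \<omega>))"
proof (rule Bochner_Integration.integrable_bound)
  show "integrable M (\<lambda>\<omega>. norm (\<xi> \<omega>) * B)"
    using assms(2) by simp
  show "(\<lambda>\<omega>. inner (\<xi> \<omega>) (V \<omega>)) \<in> borel_measurable M"
    using assms(1,3) by measurable
  show "AE \<omega> in M. norm (inner (\<xi> \<omega>) (V \<omega>)) \<le> norm (norm (\<xi> \<omega>) * B)"
  proof (rule AE_I2)
    fix \<omega> assume "\<omega> \<in> space M"
    then have "\<bar>inner (\<xi> \<omega>) (V \<omega>)\<bar> \<le> norm (\<xi> \<omega>) * B" and "B \<ge> 0"
      using Cauchy_Schwarz_ineq2 mult_left_mono[OF V] order_trans norm_ge_zero V by meson+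
    then show "norm (inner (\<xi> \<omega>) (V \<omega>)) \<le> norm (norm (\<xi> \<omega>) * B)"
      by (simp add: abs_mult)
  qed
qed

context sigma_finite_subalgebra
begin

lemma real_cond_exp_inner_const:
  fixes \<xi> :: "'a \<Rightarrow> 'b::euclidean_space"
  assumes "\<xi> \<in> borel_measurable M" and "integrable M (\<lambda>\<omega>. norm (\<xi> \<omega>))"
  shows "AE \<omega> in M. real_cond_exp M F (\<lambda>\<omega>. inner (\<xi> \<omega>) u) \<omega>
           = (\<Sum>b\<in>Basis. inner u b * real_cond_exp M F (\<lambda>\<omega>. inner (\<xi> \<omega>) b) \<omega>)"
proof -
  have int: "integrable M (\<lambda>\<omega>. inner (\<xi> \<omega>) b)" for b
    using integrable_inner_bounded[OF assms, of "\<lambda>_. b" "norm b"] by simp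
  have "(\<lambda>\<omega>. inner (\<xi> \<omega>) u) = (\<lambda>\<omega>. \<Sum>b\<in>Basis. inner u b * inner (\<xi> \<omega>) b)"
    by (simp add: euclidean_inner[of "\<xi> _" u] mult.commute)
  moreover have "AE \<omega> in M. real_cond_exp M F (\<lambda>\<omega>. \<Sum>b\<in>Basis. inner u b * inner (\<xi> \<omega>) b) \<omega>
      = (\<Sum>b\<in>Basis. real_cond_exp M F (\<lambda>\<omega>. inner u b * inner (\<xi> \<omega>) b) \<omega>)"
    using int by (intro real_cond_exp_sum) auto
  moreover have "AE \<omega> in M. \<forall>b\<in>Basis. real_cond_exp M F (\<lambda>\<omega>. inner u b * inner (\<xi> \<omega>) b) \<omega>
      = inner u b * real_cond_exp M F (\<lambda>\<omega>. inner (\<xi> \<omega>) b) \<omega>"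
    using int by (intro AE_finite_allI real_cond_exp_cmult) auto
  ultimately show ?thesis
    by (auto elim: AE_mp)
qed

lemma integral_inner_real_cond_exp:
  fixes \<xi> U :: "'a \<Rightarrow> 'b::euclidean_space"
  assumes \<xi>: "\<xi> \<in> borel_measurable M" "integrable M (\<lambda>\<omega>. norm (\<xi> \<omega>))"
    and U: "U \<in> borel_measurable F" "\<And>\<omega>. \<omega> \<in> space M \<Longrightarrow> norm (U \<omega>) \<le> R"
  shows "integrable M (\<lambda>\<omega>. \<Sum>b\<in>Basis. inner (U \<omega>) b * real_cond_exp M F (\<lambda>\<omega>. inner (\<xi> \<omega>) b) \<omega>)"
    and "(\<integral>\<omega>. inner (\<xi> \<omega>) (U \<omega>) \<partial>M)
           = (\<integral>\<omega>. (\<Sum>b\<in>Basis. inner (U \<omega>) b * real_cond_exp M F (\<lambda>\<omega>. inner (\<xi> \<omega>) b) \<omega>) \<partial>M)"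
proof -
  have UM: "U \<in> borel_measurable M"
    using U(1) by (rule measurable_from_subalg[OF subalg])
  have int: "integrable M (\<lambda>\<omega>. inner (U \<omega>) b * inner (\<xi> \<omega>) b)" if "b \<in> Basis" for b
    using integrable_inner_bounded[OF \<xi>, of "\<lambda>\<omega>. inner (U \<omega>) b *\<^sub>R b" R] UM U(2) that
    by (simp add: mult.commute) (meson Basis_le_norm order_trans)
  have UF: "(\<lambda>\<omega>. inner (U \<omega>) b) \<in> borel_measurable F" for b
    using U(1) by measurable
  have parts: "integrable M (\<lambda>\<omega>. inner (U \<omega>) b * real_cond_exp M F (\<lambda>\<omega>. inner (\<xi> \<omega>) b) \<omega>)"
    "(\<integral>\<omega>. inner (U \<omega>) b * real_cond_exp M F (\<lambda>\<omega>. inner (\<xi> \<omega>) b) \<omega> \<partial>M)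
       = (\<integral>\<omega>. inner (U \<omega>) b * inner (\<xi> \<omega>) b \<partial>M)" if "b \<in> Basis" for b
    using real_cond_exp_intg[OF int[OF that] UF] \<xi>(1) by auto
  show "integrable M (\<lambda>\<omega>. \<Sum>b\<in>Basis. inner (U \<omega>) b * real_cond_exp M F (\<lambda>\<omega>. inner (\<xi> \<omega>) b) \<omega>)"
    using parts(1) by auto
  have "(\<integral>\<omega>. inner (\<xi> \<omega>) (U \<omega>) \<partial>M) = (\<integral>\<omega>. (\<Sum>b\<in>Basis. inner (U \<omega>) b * inner (\<xi> \<omega>) b) \<partial>M)"
    by (simp add: euclidean_inner[of "\<xi> _" "U _"] mult.commute)
  also have "\<dots> = (\<Sum>b\<in>Basis. \<integral>\<omega>. inner (U \<omega>) b * inner (\<xi> \<omega>) b \<partial>M)"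
    using int by (simp add: integral_sum)
  also have "\<dots> = (\<Sum>b\<in>Basis. \<integral>\<omega>. inner (U \<omega>) b * real_cond_exp M F (\<lambda>\<omega>. inner (\<xi> \<omega>) b) \<omega> \<partial>M)"
    using parts(2) by simp
  also have "\<dots> = (\<integral>\<omega>. (\<Sum>b\<in>Basis. inner (U \<omega>) b * real_cond_exp M F (\<lambda>\<omega>. inner (\<xi> \<omega>) b) \<omega>) \<partial>M)"
    using parts(1) by (simp add: integral_sum)
  finally show "(\<integral>\<omega>. inner (\<xi> \<omega>) (U \<omega>) \<partial>M)
      = (\<integral>\<omega>. (\<Sum>b\<in>Basis. inner (U \<omega>) b * real_cond_exp M F (\<lambda>\<omega>. inner (\<xi> \<omega>) b) \<omega>) \<partial>M)" .
qed

end

lemma (in prob_space) integral_inner_le_of_real_cond_exp_le: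
  fixes \<xi> V U :: "'a \<Rightarrow> 'b::euclidean_space"
  assumes sub: "subalgebra M G"
    and \<xi>: "\<xi> \<in> borel_measurable M" "integrable M (\<lambda>\<omega>. norm (\<xi> \<omega>))"
    and V: "V \<in> borel_measurable M" "\<And>\<omega>. \<omega> \<in> space M \<Longrightarrow> norm (V \<omega>) \<le> B"
    and U: "U \<in> borel_measurable G" "\<And>\<omega>. \<omega> \<in> space M \<Longrightarrow> U \<omega> \<in> Z" and "bounded Z"
    and le: "\<And>u. u \<in> Z \<Longrightarrow> AE \<omega> in M. real_cond_exp M G (\<lambda>\<omega>. inner (\<xi> \<omega>) (V \<omega> - u)) \<omega> \<le> C"
  shows "(\<integral>\<omega>. inner (\<xi> \<omega>) (V \<omega> - U \<omega>) \<partial>M) \<le> C"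
proof -
  interpret G: finite_measure_subalgebra M G
    by unfold_locales (rule sub)
  obtain R where R: "\<And>u. u \<in> Z \<Longrightarrow> norm u \<le> R"
    using \<open>bounded Z\<close> by (auto simp: bounded_iff)
  have UM: "U \<in> borel_measurable M"
    using U(1) by (rule measurable_from_subalg[OF sub])
  define E where "E = real_cond_exp M G"
  \<comment> \<open>A version of u \<mapsto> E[<xi, V - u> | G] that is affine in u for every \<omega>: the bound for each
    fixed u then holds for all u at once and can be evaluated at the G-measurable point U \<omega>.\<close>
  define h where
    "h \<omega> u = E (\<lambda>\<omega>. inner (\<xi> \<omega>) (V \<omega>)) \<omega> - (\<Sum>b\<in>Basis. inner u b * E (\<lambda>\<omega>. inner (\<xi> \<omega>) b) \<omega>)"
    for \<omega> u
  have int_V: "integrable M (\<lambda>\<omega>. inner (\<xi> \<omega>) (V \<omega>))"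
    by (rule integrable_inner_bounded[OF \<xi> V])
  have int_U: "integrable M (\<lambda>\<omega>. inner (\<xi> \<omega>) (U \<omega>))"
    using U(2) R by (intro integrable_inner_bounded[OF \<xi> UM]) auto
  have int_const: "integrable M (\<lambda>\<omega>. inner (\<xi> \<omega>) u)" for u
    using integrable_inner_bounded[OF \<xi>, of "\<lambda>_. u" "norm u"] by simp
  have "AE \<omega> in M. \<forall>u\<in>Z. h \<omega> u \<le> C"
  proof (rule AE_ball_separable)
    fix u assume "u \<in> Z"
    have "AE \<omega> in M. E (\<lambda>\<omega>. inner (\<xi> \<omega>) (V \<omega> - u)) \<omega>
        = E (\<lambda>\<omega>. inner (\<xi> \<omega>) (V \<omega>)) \<omega> - E (\<lambda>\<omega>. inner (\<xi> \<omega>) u) \<omega>"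
      using G.real_cond_exp_diff[OF int_V int_const] by (simp add: E_def inner_diff_right)
    with G.real_cond_exp_inner_const[OF \<xi>, of u] le[OF \<open>u \<in> Z\<close>]
    show "AE \<omega> in M. h \<omega> u \<le> C"
      by eventually_elim (simp add: h_def E_def)
  next
    show "closed {u. h \<omega> u \<le> C}" for \<omega>
      unfolding h_def by (intro closed_Collect_le continuous_intros)
  qed
  then have h_le: "AE \<omega> in M. h \<omega> (U \<omega>) \<le> C"
    using U(2) by (auto elim: AE_mp)
  have Ucond: "integrable M (\<lambda>\<omega>. \<Sum>b\<in>Basis. inner (U \<omega>) b * E (\<lambda>\<omega>. inner (\<xi> \<omega>) b) \<omega>)"
    "(\<integral>\<omega>. inner (\<xi> \<omega>) (U \<omega>) \<partial>M)
       = (\<integral>\<omega>. (\<Sum>b\<in>Basis. inner (U \<omega>) b * E (\<lambda>\<omega>. inner (\<xi> \<omega>) b) \<omega>) \<partial>M)"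
    using G.integral_inner_real_cond_exp[OF \<xi> U(1)] U(2) R unfolding E_def by blast+
  have "(\<integral>\<omega>. inner (\<xi> \<omega>) (V \<omega> - U \<omega>) \<partial>M)
      = (\<integral>\<omega>. inner (\<xi> \<omega>) (V \<omega>) \<partial>M) - (\<integral>\<omega>. inner (\<xi> \<omega>) (U \<omega>) \<partial>M)"
    using int_V int_U by (simp add: inner_diff_right)
  also have "\<dots> = (\<integral>\<omega>. h \<omega> (U \<omega>) \<partial>M)"
    using Ucond G.real_cond_exp_int[OF int_V] by (simp add: h_def E_def)
  also have "\<dots> \<le> (\<integral>\<omega>. C \<partial>M)"
    using Ucond G.real_cond_exp_int[OF int_V] h_le
    by (intro integral_mono_AE) (auto simp: h_def E_def)
  also have "\<dots> = C"
    by (simp add: prob_space)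
  finally show ?thesis .
qed

lemma (in prob_space) indep_var_vimage_algebra:
  assumes indep: "indep_set {X -` A \<inter> space M | A. A \<in> sets S} {Y -` B \<inter> space M | B. B \<in> sets T}"
    and X: "X \<in> measurable M S" and Y: "Y \<in> measurable M T"
    and X': "X' \<in> measurable (vimage_algebra (space M) X S) S'"
    and Y': "Y' \<in> measurable (vimage_algebra (space M) Y T) T'"
  shows "indep_var S' X' T' Y'"
  unfolding indep_var_def indep_vars_def2
proof
  show "\<forall>i\<in>UNIV. random_variable (case_bool S' T' i) (case_bool X' Y' i)"
    using measurable_from_subalg[OF subalgebra_vimage_algebra[OF X] X']
      measurable_from_subalg[OF subalgebra_vimage_algebra[OF Y] Y']
    by (auto split: bool.split)
  have "{X' -` A \<inter> space M | A. A \<in> sets S'} \<subseteq> {X -` A \<inter> space M | A. A \<in> sets S}"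
    using measurable_sets[OF X'] X by (auto simp: sets_vimage_algebra2 measurable_space)
  moreover have "{Y' -` A \<inter> space M | A. A \<in> sets T'} \<subseteq> {Y -` B \<inter> space M | B. B \<in> sets T}"
    using measurable_sets[OF Y'] Y by (auto simp: sets_vimage_algebra2 measurable_space)
  ultimately show "indep_sets (\<lambda>i. {case_bool X' Y' i -` A \<inter> space M |A. A \<in> sets (case_bool S' T' i)}) UNIV"
    by (intro indep_sets_mono_sets[OF indep[unfolded indep_set_def]]) (auto split: bool.split)
qed

lemma (in prob_space) expectation_random_index:
  fixes X :: "nat \<Rightarrow> 'a \<Rightarrow> real" and Y :: "nat \<Rightarrow> 'a \<Rightarrow> 'b" and \<tau> :: "'a \<Rightarrow> nat"
  assumes \<tau>: "\<tau> \<in> measurable M (count_space UNIV)"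
    and dist: "\<And>k. k < K \<Longrightarrow> prob {\<omega> \<in> space M. \<tau> \<omega> = k} = p k" and p: "(\<Sum>k<K. p k) = 1"
    and Y: "\<And>k. k < K \<Longrightarrow> Y k \<in> measurable M N"
    and indep: "\<And>k. k < K \<Longrightarrow> indep_set {\<tau> -` A \<inter> space M | A. A \<in> sets (count_space UNIV)}
                                         {Y k -` B \<inter> space M | B. B \<in> sets N}"
    and X_meas: "\<And>k. k < K \<Longrightarrow> X k \<in> borel_measurable (vimage_algebra (space M) (Y k) N)"
    and X: "\<And>k. k < K \<Longrightarrow> integrable M (X k)"
    and int: "integrable M (\<lambda>\<omega>. X (\<tau> \<omega>) \<omega>)"
  shows "expectation (\<lambda>\<omega>. X (\<tau> \<omega>) \<omega>) = (\<Sum>k<K. p k * expectation (X k))"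
proof -
  define I where "I k \<omega> = (indicator {k} (\<tau> \<omega>) :: real)" for k \<omega>
  have ev: "{\<omega> \<in> space M. \<tau> \<omega> = k} \<in> events" for k
    using \<tau> by measurable
  have "prob {\<omega> \<in> space M. \<tau> \<omega> < K} = (\<Sum>k<K. prob {\<omega> \<in> space M. \<tau> \<omega> = k})"
  proof -
    have "{\<omega> \<in> space M. \<tau> \<omega> < K} = (\<Union>k<K. {\<omega> \<in> space M. \<tau> \<omega> = k})"
      by auto
    then show ?thesis
      by (simp only:) (rule finite_measure_finite_Union, auto simp: ev disjoint_family_on_def)
  qed
  then have "AE \<omega> in M. \<tau> \<omega> < K"
    using dist p ev AE_prob_1[of "{\<omega> \<in> space M. \<tau> \<omega> < K}"] by auto
  then have ae: "AE \<omega> in M. X (\<tau> \<omega>) \<omega> = (\<Sum>k<K. I k \<omega> * X k \<omega>)"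
    by eventually_elim (simp add: I_def indicator_def if_distrib sum.If_cases)
  have indep_I: "indep_var borel (I k) borel (X k)" if "k < K" for k
  proof (rule indep_var_vimage_algebra[OF indep[OF that] \<tau> Y[OF that] _ X_meas[OF that]])
    show "I k \<in> borel_measurable (vimage_algebra (space M) \<tau> (count_space UNIV))"
      unfolding I_def by (rule measurable_compose[OF measurable_vimage_algebra1]) auto
  qed
  have I_meas: "I k \<in> borel_measurable M" for k
    unfolding I_def by (rule measurable_compose[OF \<tau>]) simp
  have int_I: "integrable M (I k)" for k
    by (rule integrable_const_bound[where B=1, OF _ I_meas]) (auto simp: I_def indicator_def)
  have EI: "expectation (I k) = p k" if "k < K" for k
  proof -
    have "expectation (I k) = expectation (indicator {\<omega> \<in> space M. \<tau> \<omega> = k})"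
      by (intro Bochner_Integration.integral_cong) (auto simp: I_def indicator_def)
    then show ?thesis
      using dist[OF that] ev by simp
  qed
  have "expectation (\<lambda>\<omega>. X (\<tau> \<omega>) \<omega>) = expectation (\<lambda>\<omega>. \<Sum>k<K. I k \<omega> * X k \<omega>)"
    using ae int indep_var_integrable[OF indep_I int_I X] 
    by (intro integral_cong_AE) (auto simp: borel_measurable_integrable)
  also have "\<dots> = (\<Sum>k<K. expectation (\<lambda>\<omega>. I k \<omega> * X k \<omega>))"
    using indep_var_integrable[OF indep_I int_I X] by (simp add: integral_sum)
  also have "\<dots> = (\<Sum>k<K. p k * expectation (X k))"
    using indep_var_lebesgue_integral[OF indep_I int_I X] EI by simp
  finally show ?thesis .
qed

section \<open>One inexact proximal step in expectation\<close>

lemma (in prob_space)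
  fixes V W :: "'a \<Rightarrow> 'b::euclidean_space"
  assumes diam: "\<forall>u\<in>Z. \<forall>v\<in>Z. norm (u - v) \<le> D"
    and "V \<in> borel_measurable M" "W \<in> borel_measurable M"
    and "\<And>\<omega>. \<omega> \<in> space M \<Longrightarrow> V \<omega> \<in> Z" "\<And>\<omega>. \<omega> \<in> space M \<Longrightarrow> W \<omega> \<in> Z"
  shows integrable_norm_diff_sq: "integrable M (\<lambda>\<omega>. (norm (V \<omega> - W \<omega>))\<^sup>2)"
    and expectation_norm_diff_sq_le: "expectation (\<lambda>\<omega>. (norm (V \<omega> - W \<omega>))\<^sup>2) \<le> D\<^sup>2"
proof -
  have bound: "AE \<omega> in M. (norm (V \<omega> - W \<omega>))\<^sup>2 \<le> D\<^sup>2"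
    using assms(4,5) diam by (auto intro!: AE_I2 power_mono)
  show int: "integrable M (\<lambda>\<omega>. (norm (V \<omega> - W \<omega>))\<^sup>2)"
  proof (rule integrable_const_bound[where B="D\<^sup>2"])
    show "AE \<omega> in M. norm ((norm (V \<omega> - W \<omega>))\<^sup>2) \<le> D\<^sup>2"
      using bound by simp
  qed (use assms(2,3) in measurable)
  show "expectation (\<lambda>\<omega>. (norm (V \<omega> - W \<omega>))\<^sup>2) \<le> D\<^sup>2"
    using int bound by (rule integral_le_const)
qed

lemma (in prob_space)
  assumes wmon: "weakly_monotone_on Z F \<rho>" and "\<rho> > 0" and \<gamma>: "\<gamma> = 1 / (2 * \<rho>)"
    and zbar: "\<forall>w\<in>Z. svi_solution (prox_map F \<gamma> w) Z (zbar w)"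
    and Y: "Y \<in> borel_measurable M" "\<And>\<omega>. \<omega> \<in> space M \<Longrightarrow> Y \<omega> \<in> Z"
  shows borel_measurable_vimage_svi_solution:
      "(\<lambda>\<omega>. zbar (Y \<omega>)) \<in> borel_measurable (vimage_algebra (space M) Y borel)"
    and borel_measurable_svi_solution: "(\<lambda>\<omega>. zbar (Y \<omega>)) \<in> borel_measurable M"
proof -
  have "continuous_on Z zbar"
    using continuous_on_svi_solution_prox_map[OF wmon _ _ zbar] \<gamma> \<open>\<rho> > 0\<close> by simp
  then show G: "(\<lambda>\<omega>. zbar (Y \<omega>)) \<in> borel_measurable (vimage_algebra (space M) Y borel)"
    using Y(2) by (rule borel_measurable_vimage_algebra_continuous_on)
  show "(\<lambda>\<omega>. zbar (Y \<omega>)) \<in> borel_measurable M"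
    using G by (rule measurable_from_subalg[OF subalgebra_vimage_algebra[OF Y(1)]])
qed

lemma (in prob_space) expected_prox_step_bound:
  fixes w z \<xi> :: "'a \<Rightarrow> 'b::euclidean_space"
  assumes diam: "\<forall>u\<in>Z. \<forall>v\<in>Z. norm (u - v) \<le> D"
    and wmon: "weakly_monotone_on Z F \<rho>" and "\<rho> > 0" and \<gamma>: "\<gamma> = 1 / (2 * \<rho>)"
    and mvi: "mvi_solution F Z zs" and zbar: "\<forall>w\<in>Z. svi_solution (prox_map F \<gamma> w) Z (zbar w)"
    and w: "w \<in> borel_measurable M" "\<And>\<omega>. \<omega> \<in> space M \<Longrightarrow> w \<omega> \<in> Z"
    and z: "z \<in> borel_measurable M" "\<And>\<omega>. \<omega> \<in> space M \<Longrightarrow> z \<omega> \<in> Z"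
    and \<xi>: "\<xi> \<in> borel_measurable M" "integrable M (\<lambda>\<omega>. norm (\<xi> \<omega>))"
      "\<And>\<omega>. \<omega> \<in> space M \<Longrightarrow> \<xi> \<omega> \<in> prox_map F \<gamma> (w \<omega>) (z \<omega>)"
    and gap: "\<And>u. u \<in> Z \<Longrightarrow> AE \<omega> in M. real_cond_exp M (vimage_algebra (space M) w borel)
                  (\<lambda>\<omega>. inner (\<xi> \<omega>) (z \<omega> - u)) \<omega> \<le> C"
  shows "expectation (\<lambda>\<omega>. (norm (w \<omega> - zbar (w \<omega>)))\<^sup>2)
           \<le> 2 * (expectation (\<lambda>\<omega>. (norm (w \<omega> - zs))\<^sup>2) - expectation (\<lambda>\<omega>. (norm (z \<omega> - zs))\<^sup>2))
             + 4 * C / \<rho>"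
proof -
  let ?G = "vimage_algebra (space M) w borel"
  have sub: "subalgebra M ?G"
    using w(1) by (rule subalgebra_vimage_algebra)
  have zsZ: "zs \<in> Z" and zbarZ: "\<And>u. u \<in> Z \<Longrightarrow> zbar u \<in> Z"
    using mvi zbar by (auto simp: mvi_solution_def svi_solution_def)
  have zbar_w_G: "(\<lambda>\<omega>. zbar (w \<omega>)) \<in> borel_measurable ?G"
    and zbar_w: "(\<lambda>\<omega>. zbar (w \<omega>)) \<in> borel_measurable M"
    using borel_measurable_vimage_svi_solution[OF wmon \<open>\<rho> > 0\<close> \<gamma> zbar w]
      borel_measurable_svi_solution[OF wmon \<open>\<rho> > 0\<close> \<gamma> zbar w] by auto
  have "bounded Z"
    using diam zsZ by (intro bounded_subset[OF bounded_cball[of zs D]]) (auto simp: dist_norm)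
  then obtain R where R: "\<And>u. u \<in> Z \<Longrightarrow> norm u \<le> R"
    by (auto simp: bounded_iff)
  note int_sq = integrable_norm_diff_sq[OF diam]
  have int_gap: "integrable M (\<lambda>\<omega>. inner (\<xi> \<omega>) (z \<omega> - U \<omega>))"
    if "U \<in> borel_measurable M" "\<And>\<omega>. \<omega> \<in> space M \<Longrightarrow> U \<omega> \<in> Z" for U
    using that diam z by (intro integrable_inner_bounded[OF \<xi>(1,2)]) auto
  have gap_zbar: "(\<integral>\<omega>. inner (\<xi> \<omega>) (z \<omega> - zbar (w \<omega>)) \<partial>M) \<le> C"
    by (rule integral_inner_le_of_real_cond_exp_le[OF sub \<xi>(1,2) z(1) _ zbar_w_G _ \<open>bounded Z\<close> gap])
      (use R z(2) zbarZ w(2) in auto)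
  have gap_zs: "(\<integral>\<omega>. inner (\<xi> \<omega>) (z \<omega> - zs) \<partial>M) \<le> C"
    by (rule integral_inner_le_of_real_cond_exp_le[OF sub \<xi>(1,2) z(1) _ _ _ \<open>bounded Z\<close> gap])
      (use R z(2) zsZ in auto)
  have "expectation (\<lambda>\<omega>. (norm (w \<omega> - zbar (w \<omega>)))\<^sup>2)
      \<le> expectation (\<lambda>\<omega>. 2 * ((norm (w \<omega> - zs))\<^sup>2 - (norm (z \<omega> - zs))\<^sup>2)
           + 2 / \<rho> * inner (\<xi> \<omega>) (z \<omega> - zs) + 2 / \<rho> * inner (\<xi> \<omega>) (z \<omega> - zbar (w \<omega>)))"
  proof (rule integral_mono)
    show "integrable M (\<lambda>\<omega>. (norm (w \<omega> - zbar (w \<omega>)))\<^sup>2)"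
      using w zbar_w zbarZ by (intro int_sq) auto
    show "integrable M (\<lambda>\<omega>. 2 * ((norm (w \<omega> - zs))\<^sup>2 - (norm (z \<omega> - zs))\<^sup>2)
           + 2 / \<rho> * inner (\<xi> \<omega>) (z \<omega> - zs) + 2 / \<rho> * inner (\<xi> \<omega>) (z \<omega> - zbar (w \<omega>)))"
      using w z zsZ zbar_w zbarZ by (intro Bochner_Integration.integrable_add
          Bochner_Integration.integrable_diff integrable_mult_right int_sq int_gap) auto
    show "(norm (w \<omega> - zbar (w \<omega>)))\<^sup>2 \<le> 2 * ((norm (w \<omega> - zs))\<^sup>2 - (norm (z \<omega> - zs))\<^sup>2)
           + 2 / \<rho> * inner (\<xi> \<omega>) (z \<omega> - zs) + 2 / \<rho> * inner (\<xi> \<omega>) (z \<omega> - zbar (w \<omega>))"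
      if "\<omega> \<in> space M" for \<omega>
      using prox_step_distance_bound[OF wmon \<open>\<rho> > 0\<close> \<gamma> z(2) \<xi>(3) mvi] zbar w(2) that by blast
  qed
  also have "\<dots> = 2 * (expectation (\<lambda>\<omega>. (norm (w \<omega> - zs))\<^sup>2) - expectation (\<lambda>\<omega>. (norm (z \<omega> - zs))\<^sup>2))
      + 2 / \<rho> * (\<integral>\<omega>. inner (\<xi> \<omega>) (z \<omega> - zs) \<partial>M)
      + 2 / \<rho> * (\<integral>\<omega>. inner (\<xi> \<omega>) (z \<omega> - zbar (w \<omega>)) \<partial>M)"
    using w z zsZ zbar_w zbarZ int_sq int_gap by simp
  also have "\<dots> \<le> 2 * (expectation (\<lambda>\<omega>. (norm (w \<omega> - zs))\<^sup>2) - expectation (\<lambda>\<omega>. (norm (z \<omega> - zs))\<^sup>2))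
      + 2 / \<rho> * C + 2 / \<rho> * C"
    using gap_zs gap_zbar \<open>\<rho> > 0\<close> by (intro add_mono mult_left_mono) auto
  finally show ?thesis
    by (simp add: field_simps)
qed

section \<open>Averages with polynomial weights\<close>

lemma powr_Suc_diff_le:
  fixes \<alpha> :: real
  assumes "\<alpha> \<ge> 0"
  shows "(real n + 1) powr (\<alpha> + 1) - real n powr (\<alpha> + 1) \<le> (\<alpha> + 1) * (real n + 1) powr \<alpha>"
proof (cases "n = 0")
  case True
  then show ?thesis using assms by simp
next
  case False
  define g where "g x = (\<alpha> + 1) * (real n + 1) powr \<alpha> * x - x powr (\<alpha> + 1)" for x :: real
  have "g (real n) \<le> g (real n + 1)"
  proof (rule DERIV_nonneg_imp_nondecreasing[of "real n"])
    fix x assume x: "real n \<le> x" "x \<le> real n + 1"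
    then have "x > 0" using False by simp
    have "(g has_real_derivative (\<alpha> + 1) * (real n + 1) powr \<alpha> - (\<alpha> + 1) * x powr \<alpha>) (at x)"
      unfolding g_def using \<open>x > 0\<close>
      by (auto intro!: derivative_eq_intros has_real_derivative_powr)
    moreover have "x powr \<alpha> \<le> (real n + 1) powr \<alpha>"
      using x \<open>x > 0\<close> assms by (intro powr_mono2) auto
    ultimately show "\<exists>y. (g has_real_derivative y) (at x) \<and> 0 \<le> y"
      using assms by (auto intro: mult_left_mono)
  qed simp
  then show ?thesis unfolding g_def by (simp add: algebra_simps)
qed

lemma sum_powr_ge:
  fixes \<alpha> :: real
  assumes "\<alpha> \<ge> 0"
  shows "real K powr (\<alpha> + 1) / (\<alpha> + 1) \<le> (\<Sum>k<K. (real k + 1) powr \<alpha>)"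
proof (induction K)
  case 0
  then show ?case using assms by simp
next
  case (Suc K)
  have "real (Suc K) powr (\<alpha> + 1) / (\<alpha> + 1) \<le> real K powr (\<alpha> + 1) / (\<alpha> + 1) + (real K + 1) powr \<alpha>"
    using divide_right_mono[OF powr_Suc_diff_le[OF assms, of K], of "\<alpha> + 1"] assms
    by (simp add: diff_divide_distrib add.commute)
  then show ?case using Suc by simp
qed

lemma sum_powr_div_le:
  fixes \<alpha> :: real
  assumes "\<alpha> \<ge> 1"
  shows "(\<Sum>k<K. (real k + 1) powr \<alpha> / (real k + 1)) \<le> real K powr \<alpha>"
proof -
  have "(\<Sum>k<K. (real k + 1) powr \<alpha> / (real k + 1)) \<le> (\<Sum>k<K. real K powr (\<alpha> - 1))"
  proof (rule sum_mono)
    fix k assume "k \<in> {..<K}"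
    then have "(real k + 1) powr (\<alpha> - 1) \<le> real K powr (\<alpha> - 1)"
      using assms by (intro powr_mono2) auto
    then show "(real k + 1) powr \<alpha> / (real k + 1) \<le> real K powr (\<alpha> - 1)"
      by (simp add: powr_diff)
  qed
  also have "\<dots> = real K powr \<alpha>"
    by (cases "K = 0") (simp_all add: powr_mult_base)
  finally show ?thesis .
qed

lemma sum_weighted_differences_le:
  fixes \<theta> a :: "nat \<Rightarrow> real"
  assumes mono: "\<And>k. \<theta> k \<le> \<theta> (Suc k)" and "\<And>k. \<theta> k \<ge> 0"
    and a: "\<And>k. k \<le> Suc n \<Longrightarrow> 0 \<le> a k \<and> a k \<le> B"
  shows "(\<Sum>k<Suc n. \<theta> k * (a k - a (Suc k))) \<le> \<theta> n * B"
proof -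
  have "(\<Sum>k<Suc m. \<theta> k * (a k - a (Suc k))) + \<theta> m * a (Suc m) \<le> \<theta> m * B" if "m \<le> n" for m
    using that
  proof (induction m)
    case 0
    then show ?case using a[of 0] \<open>\<theta> 0 \<ge> 0\<close> mult_left_mono[of "a 0" B "\<theta> 0"]
      by (simp add: right_diff_distrib)
  next
    case (Suc m)
    have "(\<theta> (Suc m) - \<theta> m) * a (Suc m) \<le> (\<theta> (Suc m) - \<theta> m) * B"
      using mono a[of "Suc m"] Suc.prems by (intro mult_left_mono) auto
    then show ?case using Suc by (simp add: algebra_simps)
  qed
  moreover have "0 \<le> \<theta> n * a (Suc n)"
    using a[of "Suc n"] \<open>\<theta> n \<ge> 0\<close> by simp
  ultimately show ?thesis by fastforce
qed

lemma powr_weighted_average_le: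
  fixes a f :: "nat \<Rightarrow> real" and \<alpha> :: real
  assumes "\<alpha> \<ge> 1" and "K \<ge> 1" and "A \<ge> 0" and "B \<ge> 0"
    and a: "\<And>k. k \<le> K \<Longrightarrow> 0 \<le> a k \<and> a k \<le> R"
    and f: "\<And>k. k < K \<Longrightarrow> f k \<le> A * (a k - a (Suc k)) + B / (real k + 1)"
  shows "(\<Sum>k<K. (real k + 1) powr \<alpha> * f k) / (\<Sum>k<K. (real k + 1) powr \<alpha>)
           \<le> (\<alpha> + 1) * (A * R + B) / real K"
proof -
  define \<theta> where "\<theta> k = (real k + 1) powr \<alpha>" for k
  define S where "S = (\<Sum>k<K. \<theta> k)"
  have K: "Suc (K - 1) = K" "\<theta> (K - 1) = real K powr \<alpha>" "real K > 0"
    using \<open>K \<ge> 1\<close> by (simp_all add: \<theta>_def of_nat_diff)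
  have sum_diff: "(\<Sum>k<K. \<theta> k * (a k - a (Suc k))) \<le> real K powr \<alpha> * R"
    using sum_weighted_differences_le[of \<theta> "K - 1" a R] a \<open>\<alpha> \<ge> 1\<close>
    unfolding K(1,2) by (simp add: \<theta>_def powr_mono2)
  have sum_div: "(\<Sum>k<K. \<theta> k / (real k + 1)) \<le> real K powr \<alpha>"
    using sum_powr_div_le[OF \<open>\<alpha> \<ge> 1\<close>] by (simp add: \<theta>_def)
  have num: "(\<Sum>k<K. \<theta> k * f k) \<le> real K powr \<alpha> * (A * R + B)"
  proof -
    have "(\<Sum>k<K. \<theta> k * f k) \<le> (\<Sum>k<K. \<theta> k * (A * (a k - a (Suc k)) + B / (real k + 1)))"
      using f by (intro sum_mono mult_left_mono) (auto simp: \<theta>_def)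
    also have "\<dots> = A * (\<Sum>k<K. \<theta> k * (a k - a (Suc k))) + B * (\<Sum>k<K. \<theta> k / (real k + 1))"
      unfolding sum_distrib_left sum.distrib[symmetric] by (intro sum.cong) (simp_all add: algebra_simps)
    also have "\<dots> \<le> A * (real K powr \<alpha> * R) + B * real K powr \<alpha>"
      using sum_diff sum_div \<open>A \<ge> 0\<close> \<open>B \<ge> 0\<close> by (intro add_mono mult_left_mono)
    finally show ?thesis by (simp add: algebra_simps)
  qed
  have den: "real K powr (\<alpha> + 1) / (\<alpha> + 1) \<le> S"
    using sum_powr_ge[of \<alpha> K] \<open>\<alpha> \<ge> 1\<close> by (simp add: S_def \<theta>_def)
  have den_pos: "0 < real K powr (\<alpha> + 1) / (\<alpha> + 1)"
    using K(3) \<open>\<alpha> \<ge> 1\<close> by simp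
  have "0 \<le> A * R + B"
    using a[of 0] \<open>A \<ge> 0\<close> \<open>B \<ge> 0\<close> by simp
  have "(\<Sum>k<K. \<theta> k * f k) / S \<le> real K powr \<alpha> * (A * R + B) / S"
    using num den den_pos by (intro divide_right_mono) auto
  also have "\<dots> \<le> real K powr \<alpha> * (A * R + B) / (real K powr (\<alpha> + 1) / (\<alpha> + 1))"
    using den den_pos \<open>0 \<le> A * R + B\<close> by (intro divide_left_mono mult_pos_pos) auto
  also have "\<dots> = (\<alpha> + 1) * (A * R + B) / real K"
    using K(3) \<open>\<alpha> \<ge> 1\<close> by (simp add: powr_add field_simps)
  finally show ?thesis by (simp add: \<theta>_def S_def)
qed

theorem theorem7:
  fixes Z :: "'a::euclidean_space set"
    and F :: "'a \<Rightarrow> 'a set"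
    and D \<rho> \<gamma> \<alpha> c :: real
    and K :: nat
    and \<theta> :: "nat \<Rightarrow> real"
    and M :: "'b measure"
    and z \<xi> :: "nat \<Rightarrow> 'b \<Rightarrow> 'a"
    and z0 :: 'a
    and \<tau> :: "'b \<Rightarrow> nat"
    and zbar :: "'a \<Rightarrow> 'a"
  assumes convex_Z: "convex Z" and compact_Z: "compact Z"
    and diam: "\<forall>u\<in>Z. \<forall>v\<in>Z. norm (u - v) \<le> D"
    and rho_pos: "\<rho> > 0"
    and wmon: "weakly_monotone_on Z F \<rho>"
    and mvi: "\<exists>zs. mvi_solution F Z zs"
    and gamma_def: "\<gamma> = 1 / (2 * \<rho>)"
    and alpha: "\<alpha> \<ge> 1"
    and K_pos: "K \<ge> 1"
    and theta_def: "\<And>k. \<theta> k = (real k + 1) powr \<alpha>"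
    and c_pos: "c > 0"
    and prob: "prob_space M"
    and z0_in: "z0 \<in> Z"
    and z_0: "\<And>\<omega>. \<omega> \<in> space M \<Longrightarrow> z 0 \<omega> = z0"
    and z_meas: "\<And>k. k \<le> K \<Longrightarrow> z k \<in> borel_measurable M"
    and z_in: "\<And>k \<omega>. k \<le> K \<Longrightarrow> \<omega> \<in> space M \<Longrightarrow> z k \<omega> \<in> Z"
    and xi_meas: "\<And>k. k < K \<Longrightarrow> \<xi> (Suc k) \<in> borel_measurable M"
    and xi_int: "\<And>k. k < K \<Longrightarrow> integrable M (\<lambda>\<omega>. norm (\<xi> (Suc k) \<omega>))"
    and xi_in: "\<And>k \<omega>. k < K \<Longrightarrow> \<omega> \<in> space M \<Longrightarrow>
                  \<xi> (Suc k) \<omega> \<in> prox_map F \<gamma> (z k \<omega>) (z (Suc k) \<omega>)"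
    and xi_gap: "\<And>k u. k < K \<Longrightarrow> u \<in> Z \<Longrightarrow>
                  AE \<omega> in M. real_cond_exp M (vimage_algebra (space M) (z k) borel)
                       (\<lambda>\<omega>'. inner (\<xi> (Suc k) \<omega>') (z (Suc k) \<omega>' - u)) \<omega> \<le> c / (real k + 1)"
    and tau_meas: "\<tau> \<in> measurable M (count_space UNIV)"
    and tau_dist: "\<And>k. k < K \<Longrightarrow>
                  measure M {\<omega> \<in> space M. \<tau> \<omega> = k} = \<theta> k / (\<Sum>l<K. \<theta> l)"
    and tau_indep: "\<And>k. k < K \<Longrightarrow> prob_space.indep_set M
                  {\<tau> -` A \<inter> space M | A. A \<in> sets (count_space UNIV)}
                  {z k -` B \<inter> space M | B. B \<in> sets borel}"
    and zbar_sol: "\<forall>w\<in>Z. svi_solution (prox_map F \<gamma> w) Z (zbar w)"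
  shows "prob_space.expectation M (\<lambda>\<omega>. (norm (z (\<tau> \<omega>) \<omega> - zbar (z (\<tau> \<omega>) \<omega>)))\<^sup>2)
           \<le> 2 * D\<^sup>2 * (\<alpha> + 1) / real K + 4 * c * (\<alpha> + 1) / (real K * \<rho>)"
proof -
  interpret prob_space M by (rule prob)
  obtain zs where zs: "mvi_solution F Z zs" using mvi by blast
  have in_Z: "zs \<in> Z" "\<And>w. w \<in> Z \<Longrightarrow> zbar w \<in> Z"
    using zs zbar_sol by (auto simp: mvi_solution_def svi_solution_def)
  define X where "X k \<omega> = (norm (z k \<omega> - zbar (z k \<omega>)))\<^sup>2" for k \<omega>
  define a where "a k = expectation (\<lambda>\<omega>. (norm (z k \<omega> - zs))\<^sup>2)" for k
  define S where "S = (\<Sum>l<K. \<theta> l)"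
  note zbar_z = borel_measurable_vimage_svi_solution[OF wmon rho_pos gamma_def zbar_sol z_meas z_in]
    borel_measurable_svi_solution[OF wmon rho_pos gamma_def zbar_sol z_meas z_in]
  have X: "X k \<in> borel_measurable (vimage_algebra (space M) (z k) borel)" "integrable M (X k)"
    if "k \<le> K" for k
    using zbar_z[OF that] measurable_vimage_algebra1[of "z k" "space M" borel] that
      integrable_norm_diff_sq[OF diam z_meas _ z_in] in_Z z_in
    unfolding X_def by auto
  have a_bounds: "0 \<le> a k \<and> a k \<le> D\<^sup>2" if "k \<le> K" for k
    using expectation_norm_diff_sq_le[OF diam z_meas[OF that] _ z_in[OF that], of "\<lambda>_. zs"] in_Z
    unfolding a_def by auto
  have step: "expectation (X k) \<le> 2 * (a k - a (Suc k)) + 4 * c / \<rho> / (real k + 1)" if "k < K" for k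
    using expected_prox_step_bound[OF diam wmon rho_pos gamma_def zs zbar_sol z_meas z_in z_meas z_in
        xi_meas xi_int xi_in xi_gap] that unfolding a_def X_def by (simp add: field_simps)
  have "S > 0"
    unfolding S_def theta_def using K_pos by (intro sum_pos) (auto simp: lessThan_empty_iff)
  then have "(\<Sum>k<K. \<theta> k / S) = 1"
    by (simp add: S_def sum_divide_distrib[symmetric])
  show ?thesis
  proof (cases "integrable M (\<lambda>\<omega>. X (\<tau> \<omega>) \<omega>)")
    case True
    have "expectation (\<lambda>\<omega>. X (\<tau> \<omega>) \<omega>) = (\<Sum>k<K. \<theta> k / S * expectation (X k))"
      by (rule expectation_random_index[where Y=z and N=borel])
        (use tau_meas tau_dist tau_indep z_meas X True \<open>(\<Sum>k<K. \<theta> k / S) = 1\<close> in \<open>auto simp: S_def\<close>)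
    also have "\<dots> = (\<Sum>k<K. (real k + 1) powr \<alpha> * expectation (X k)) / (\<Sum>k<K. (real k + 1) powr \<alpha>)"
      by (simp add: S_def theta_def sum_divide_distrib)
    also have "\<dots> \<le> (\<alpha> + 1) * (2 * D\<^sup>2 + 4 * c / \<rho>) / real K"
      by (rule powr_weighted_average_le[where a=a]) (use step a_bounds alpha K_pos c_pos rho_pos in auto)
    also have "\<dots> = 2 * D\<^sup>2 * (\<alpha> + 1) / real K + 4 * c * (\<alpha> + 1) / (real K * \<rho>)"
      using rho_pos K_pos by (simp add: field_simps)
    finally show ?thesis
      by (simp add: X_def)
  next
    case False
    \<comment> \<open>Possible since z k is only known to be measurable for k \<le> K and M need not be complete;
      the integral is then 0.\<close>
    then show ?thesis
      using alpha c_pos rho_pos by (simp add: X_def not_integrable_integral_eq)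
  qed
qed

end
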